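(* Let $\gamma\in\mathbb{C}\setminus\{0\}$. The group $\Gamma_\gamma$ is not free if and only if $\gamma$ is a fixed point of some word polynomial $p_w$ ($w$ a good word), i.e. $p_w(\gamma)=\gamma$. Further, if $\gamma$ is an eventually periodic point of some word polynomial $p_w$ (i.e. $p_w^{(n)}(\gamma)$ is a periodic point of $p_w$ for some $n\ge0$), then $\Gamma_\gamma$ is not free.
   Context: $\Gamma_\gamma=\langle \pm\begin{pmatrix}1&1\\0&1\end{pmatrix},\pm\begin{pmatrix}1&0\\ \gamma&1\end{pmatrix}\rangle\subset PSL(2,\mathbb{C})$, a group generated by two parabolics. For $x,y\in PSL(2,\mathbb{C})$, $\gamma(x,y)=\operatorname{tr}[x,y]-2$. A good word is a reduced word $w=a^{m_1}ba^{m_2}b\cdots ba^{m_n}$ in $\langle a,b\mid b^2=1\rangle$ with $n\ge3$ and $m_i\ne0$ for $2\le i\le n-1$; its word polynomial $p_w\in\mathbb{Z}[z]$ is the unique polynomial with $\gamma(f,w(f,\phi))=p_w(\gamma(f,\phi))$ for every parabolic $f$ and every order-two elliptic $\phi$ in $PSL(2,\mathbb{C})$ ($w(f,\phi)$: substitute $a=f,b=\phi$). $p^{(k)}$ denotes the $k$-th iterate of $p$. *)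

theory Defs
  imports Complex_Main "HOL-Computational_Algebra.Polynomial"
begin

text \<open>2x2 complex matrices; elements of PSL(2,C) are represented by matrices of
determinant 1, two matrices M, N representing the same element iff M = N or M = -N.\<close>

datatype mat2 = Mat complex complex complex complex

fun mmul :: "mat2 \<Rightarrow> mat2 \<Rightarrow> mat2" where
  "mmul (Mat a b c d) (Mat e f g h) =
     Mat (a*e + b*g) (a*f + b*h) (c*e + d*g) (c*f + d*h)"

fun mdet :: "mat2 \<Rightarrow> complex" where
  "mdet (Mat a b c d) = a*d - b*c"

fun mtr :: "mat2 \<Rightarrow> complex" where
  "mtr (Mat a b c d) = a + d"

fun mneg :: "mat2 \<Rightarrow> mat2" where
  "mneg (Mat a b c d) = Mat (-a) (-b) (-c) (-d)"

text \<open>Adjugate; this is the inverse of a determinant-one matrix.\<close>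
fun madj :: "mat2 \<Rightarrow> mat2" where
  "madj (Mat a b c d) = Mat d (-b) (-c) a"

definition mI :: mat2 where "mI = Mat 1 0 0 1"

fun mpow :: "mat2 \<Rightarrow> nat \<Rightarrow> mat2" where
  "mpow M 0 = mI"
| "mpow M (Suc n) = mmul M (mpow M n)"

definition mpowi :: "mat2 \<Rightarrow> int \<Rightarrow> mat2" where
  "mpowi M k = (if 0 \<le> k then mpow M (nat k) else mpow (madj M) (nat (-k)))"

definition SL2 :: "mat2 \<Rightarrow> bool" where "SL2 M \<longleftrightarrow> mdet M = 1"

definition psl_eq :: "mat2 \<Rightarrow> mat2 \<Rightarrow> bool" where
  "psl_eq M N \<longleftrightarrow> M = N \<or> M = mneg N"

definition commut :: "mat2 \<Rightarrow> mat2 \<Rightarrow> mat2" where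
  "commut x y = mmul x (mmul y (mmul (madj x) (madj y)))"

definition gam :: "mat2 \<Rightarrow> mat2 \<Rightarrow> complex" where
  "gam x y = mtr (commut x y) - 2"

definition parabolic :: "mat2 \<Rightarrow> bool" where
  "parabolic f \<longleftrightarrow> SL2 f \<and> (mtr f = 2 \<or> mtr f = -2) \<and> \<not> psl_eq f mI"

definition elliptic2 :: "mat2 \<Rightarrow> bool" where
  "elliptic2 \<phi> \<longleftrightarrow> SL2 \<phi> \<and> psl_eq (mmul \<phi> \<phi>) mI \<and> \<not> psl_eq \<phi> mI"

text \<open>A word a^m1 b a^m2 b ... b a^mn in <a,b | b^2=1> is encoded by the list [m1,...,mn].
  It is good iff n >= 3 and m_i \<noteq> 0 for 2 <= i <= n-1 (then it is automatically reduced).\<close>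
definition good_word :: "int list \<Rightarrow> bool" where
  "good_word ms \<longleftrightarrow> length ms \<ge> 3 \<and> (\<forall>i. 1 \<le> i \<and> i < length ms - 1 \<longrightarrow> ms ! i \<noteq> 0)"

fun weval :: "mat2 \<Rightarrow> mat2 \<Rightarrow> int list \<Rightarrow> mat2" where
  "weval f \<phi> [] = mI"
| "weval f \<phi> [m] = mpowi f m"
| "weval f \<phi> (m # m' # ms) = mmul (mpowi f m) (mmul \<phi> (weval f \<phi> (m' # ms)))"

definition is_word_poly :: "int list \<Rightarrow> int poly \<Rightarrow> bool" where
  "is_word_poly w p \<longleftrightarrow>
     (\<forall>f \<phi>. parabolic f \<longrightarrow> elliptic2 \<phi> \<longrightarrow>
        gam f (weval f \<phi> w) = poly (map_poly of_int p) (gam f \<phi>))"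

text \<open>The word polynomial p_w (the unique polynomial with the property above).\<close>
definition word_poly :: "int list \<Rightarrow> int poly" where
  "word_poly w = (THE p. is_word_poly w p)"

definition wpoly :: "int list \<Rightarrow> complex \<Rightarrow> complex" where
  "wpoly w z = poly (map_poly of_int (word_poly w)) z"

text \<open>The group Gamma_gamma generated by A = [[1,1],[0,1]] and B = [[1,0],[gamma,1]].\<close>
definition genA :: mat2 where "genA = Mat 1 1 0 1"
definition genB :: "complex \<Rightarrow> mat2" where "genB \<gamma> = Mat 1 0 \<gamma> 1"

text \<open>Words in the free group on two letters: lists of (letter, exponent),
  letter True = A, False = B.\<close>
fun feval :: "complex \<Rightarrow> (bool \<times> int) list \<Rightarrow> mat2" where
  "feval \<gamma> [] = mI"
| "feval \<gamma> ((g, k) # ws) = mmul (mpowi (if g then genA else genB \<gamma>) k) (feval \<gamma> ws)"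

definition reduced_fword :: "(bool \<times> int) list \<Rightarrow> bool" where
  "reduced_fword ws \<longleftrightarrow> ws \<noteq> [] \<and> (\<forall>x\<in>set ws. snd x \<noteq> 0) \<and>
     (\<forall>i. i + 1 < length ws \<longrightarrow> fst (ws ! i) \<noteq> fst (ws ! (i + 1)))"

definition Gamma_free :: "complex \<Rightarrow> bool" where
  "Gamma_free \<gamma> \<longleftrightarrow> (\<forall>ws. reduced_fword ws \<longrightarrow> \<not> psl_eq (feval \<gamma> ws) mI)"

end

theory Submission
  imports Defs
begin

text \<open>
  Conjugating a parabolic \<open>f\<close> to \<open>A\<close> and an order-two elliptic \<open>\<phi>\<close> to
  \<open>invol c = [[0, -1/c], [c, 0]]\<close> turns \<open>\<gamma>(f, \<phi>)\<close> into \<open>c\<^sup>2\<close> and \<open>\<gamma>(f, w(f, \<phi>))\<close> into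
  the square of the lower-left entry of \<open>w(A, invol c)\<close>, an integer polynomial in \<open>c\<^sup>2\<close>:
  this is \<open>p\<^sub>w\<close>.

  With \<open>\<gamma> = c\<^sup>2\<close>, conjugation by \<open>invol c\<close> exchanges \<open>A\<^sup>m\<close> and \<open>B\<^sup>-\<^sup>m\<close>, so a relation
  \<open>B\<^bsup>f\<^sub>1\<^esup> A\<^bsup>e\<^sub>1\<^esup> \<dots> B\<^bsup>f\<^sub>k\<^esup> A\<^bsup>e\<^sub>k\<^esup> = \<plusminus>1\<close> in \<open>\<Gamma>\<^sub>\<gamma>\<close> (every relation can be cyclically
  reduced to this shape) says \<open>w(A, invol c) = \<plusminus>invol c\<close> for the good word
  \<open>w = [0, -f\<^sub>1, e\<^sub>1, \<dots>, -f\<^sub>k, e\<^sub>k, 0]\<close>, hence \<open>p\<^sub>w(\<gamma>) = \<gamma>\<close>.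

  Conversely, let \<open>\<Gamma>\<^sub>\<delta>\<close> be free and \<open>w\<close> good. Conjugation by a suitable upper unipotent
  matrix fixes \<open>A\<close> and sends \<open>B\<^bsub>p\<^sub>w(\<delta>)\<^esub>\<close> to an element \<open>V A\<^sup>-\<^sup>1 V\<^sup>-\<^sup>1\<close> of \<open>\<Gamma>\<^sub>\<delta>\<close>
  whose reduced word begins and ends with \<open>B\<close>; substituting this word for \<open>B\<close> maps reduced
  words to reduced words, so \<open>\<Gamma>\<^bsub>p\<^sub>w(\<delta>)\<^esub>\<close> is free and is carried into \<open>\<Gamma>\<^sub>\<delta>\<close>, missing
  \<open>B\<^sub>\<delta>\<close>. Along an eventually periodic orbit of \<open>p\<^sub>w\<close> these conjugations compose to one that
  maps some \<open>\<Gamma>\<^sub>\<delta>\<close> onto itself, which is impossible.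
\<close>

notation mmul (infixl "\<star>" 70)

section \<open>Matrices of determinant one\<close>

lemma mmul_assoc: "(x \<star> y) \<star> z = x \<star> (y \<star> z)"
  by (cases x; cases y; cases z) (simp add: algebra_simps)

lemma mmul_mI_left [simp]: "mI \<star> x = x" and mmul_mI_right [simp]: "x \<star> mI = x"
  by (cases x; simp add: mI_def)+

lemma mdet_mmul [simp]: "mdet (x \<star> y) = mdet x * mdet y"
  by (cases x; cases y) (simp add: algebra_simps)

lemma madj_mmul: "madj (x \<star> y) = madj y \<star> madj x"
  by (cases x; cases y) (simp add: algebra_simps)

lemma madj_madj [simp]: "madj (madj x) = x"
  by (cases x) simp

lemma mdet_madj [simp]: "mdet (madj x) = mdet x"
  by (cases x) (simp add: algebra_simps)

lemma madj_mI [simp]: "madj mI = mI" and mdet_mI [simp]: "mdet mI = 1"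
  by (simp_all add: mI_def)

lemma mmul_madj_self: "mdet x = 1 \<Longrightarrow> x \<star> madj x = mI"
  by (cases x) (simp add: mI_def algebra_simps)

lemma madj_mmul_self: "mdet x = 1 \<Longrightarrow> madj x \<star> x = mI"
  by (cases x) (simp add: mI_def algebra_simps)

lemma madj_mmul_cancel: "mdet g = 1 \<Longrightarrow> madj g \<star> (g \<star> z) = z"
  by (metis mmul_mI_left madj_mmul_self mmul_assoc)

lemma mneg_mmul_left [simp]: "mneg x \<star> y = mneg (x \<star> y)"
  and mneg_mmul_right [simp]: "x \<star> mneg y = mneg (x \<star> y)"
  by (cases x; cases y; simp add: algebra_simps)+

lemma mneg_inj [simp]: "mneg x = mneg y \<longleftrightarrow> x = y"
  by (cases x; cases y) auto

lemma mneg_mneg [simp]: "mneg (mneg x) = x"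
  and madj_mneg [simp]: "madj (mneg x) = mneg (madj x)"
  and mdet_mneg [simp]: "mdet (mneg x) = mdet x"
  and mtr_mneg [simp]: "mtr (mneg x) = - mtr x"
  by (cases x; simp)+

lemma conj_mmul:
  "mdet g = 1 \<Longrightarrow> (g \<star> x \<star> madj g) \<star> (g \<star> y \<star> madj g) = g \<star> (x \<star> y) \<star> madj g"
  by (simp add: mmul_assoc madj_mmul_cancel)

lemma madj_conj: "madj (g \<star> x \<star> madj g) = g \<star> madj x \<star> madj g"
  by (simp add: madj_mmul mmul_assoc)

lemma mtr_conj: "mdet g = 1 \<Longrightarrow> mtr (g \<star> x \<star> madj g) = mtr x"
proof -
  assume det: "mdet g = 1"
  obtain a b c d where g: "g = Mat a b c d" by (cases g)
  obtain p q r s where x: "x = Mat p q r s" by (cases x)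
  have "a * d - b * c = 1" using det g by simp
  then show ?thesis unfolding g x by simp algebra
qed

lemma psl_eq_refl [simp]: "psl_eq x x"
  and psl_eq_mneg_left [simp]: "psl_eq (mneg x) y \<longleftrightarrow> psl_eq x y"
  and psl_eq_mneg_right [simp]: "psl_eq x (mneg y) \<longleftrightarrow> psl_eq x y"
  by (auto simp: psl_eq_def)

lemma psl_eq_sym: "psl_eq x y \<Longrightarrow> psl_eq y x"
  and psl_eq_trans [trans]: "psl_eq x y \<Longrightarrow> psl_eq y z \<Longrightarrow> psl_eq x z"
  and psl_eq_mmul: "psl_eq x x' \<Longrightarrow> psl_eq y y' \<Longrightarrow> psl_eq (x \<star> y) (x' \<star> y')"
  by (auto simp: psl_eq_def)

lemma psl_eq_cancel_left: "mdet g = 1 \<Longrightarrow> psl_eq (g \<star> x) (g \<star> y) \<Longrightarrow> psl_eq x y"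
  by (metis madj_mmul_cancel psl_eq_mmul psl_eq_refl)

lemma psl_eq_imp_mI: "mdet y = 1 \<Longrightarrow> psl_eq x y \<Longrightarrow> psl_eq (madj y \<star> x) mI"
  using psl_eq_mmul[OF psl_eq_refl, of x y "madj y"] by (simp add: madj_mmul_self)

lemma psl_eq_mI_rotate:
  assumes "mdet x = 1" and "psl_eq (x \<star> y) mI"
  shows "psl_eq (y \<star> x) mI"
proof -
  have "psl_eq (madj x \<star> (x \<star> y) \<star> x) (madj x \<star> mI \<star> x)"
    using assms(2) by (intro psl_eq_mmul psl_eq_refl)
  then show ?thesis using assms(1) by (simp add: mmul_assoc madj_mmul_cancel madj_mmul_self)
qed

lemma mpow_mneg: "mpow (mneg x) n = (if even n then mpow x n else mneg (mpow x n))"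
  by (induction n) auto

lemma mpowi_mneg: "psl_eq (mpowi (mneg x) k) (mpowi x k)"
  by (simp add: mpowi_def mpow_mneg)

lemma mpowi_0 [simp]: "mpowi x 0 = mI"
  by (simp add: mpowi_def)

lemma mdet_mpowi: "mdet x = 1 \<Longrightarrow> mdet (mpowi x k) = 1"
proof -
  have "mdet x = 1 \<Longrightarrow> mdet (mpow x n) = 1" for x n
    by (induction n) auto
  then show "mdet x = 1 \<Longrightarrow> mdet (mpowi x k) = 1"
    by (simp add: mpowi_def)
qed

lemma mpow_conj: "mdet g = 1 \<Longrightarrow> mpow (g \<star> x \<star> madj g) n = g \<star> mpow x n \<star> madj g"
  by (induction n) (simp_all add: mmul_madj_self conj_mmul[symmetric])

lemma mpowi_conj: "mdet g = 1 \<Longrightarrow> mpowi (g \<star> x \<star> madj g) k = g \<star> mpowi x k \<star> madj g"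
  by (simp add: mpowi_def mpow_conj madj_conj)

lemma weval_conj:
  "mdet g = 1 \<Longrightarrow> weval (g \<star> f \<star> madj g) (g \<star> \<phi> \<star> madj g) w = g \<star> weval f \<phi> w \<star> madj g"
  by (induction f \<phi> w rule: weval.induct) (simp_all add: mmul_madj_self mpowi_conj conj_mmul)

lemma weval_mneg: "psl_eq (weval (mneg f) \<phi> w) (weval f \<phi> w)"
  by (induction f \<phi> w rule: weval.induct) (simp_all add: mpowi_mneg psl_eq_mmul)

lemma weval_Cons: "ms \<noteq> [] \<Longrightarrow> weval f \<phi> (m # ms) = mpowi f m \<star> (\<phi> \<star> weval f \<phi> ms)"
  by (cases ms) auto

lemma mdet_weval: "mdet f = 1 \<Longrightarrow> mdet \<phi> = 1 \<Longrightarrow> mdet (weval f \<phi> w) = 1"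
  by (induction f \<phi> w rule: weval.induct) (auto simp: mdet_mpowi)

lemma gam_conj: "mdet g = 1 \<Longrightarrow> gam (g \<star> x \<star> madj g) (g \<star> y \<star> madj g) = gam x y"
  by (simp add: gam_def commut_def madj_conj conj_mmul mtr_conj)

lemma gam_mneg_left [simp]: "gam (mneg x) y = gam x y"
  and gam_mneg_right [simp]: "gam x (mneg y) = gam x y"
  by (simp_all add: gam_def commut_def)

lemma gam_psl_eq: "psl_eq y y' \<Longrightarrow> gam x y = gam x y'"
  by (auto simp: psl_eq_def)

section \<open>Unipotent matrices and the standard involution\<close>

definition upper :: "complex \<Rightarrow> mat2" where
  "upper t = Mat 1 t 0 1"

definition invol :: "complex \<Rightarrow> mat2" where
  "invol c = Mat 0 (-1/c) c 0"

fun lower_left :: "mat2 \<Rightarrow> complex" where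
  "lower_left (Mat a b c d) = c"

lemma mdet_invol [simp]: "c \<noteq> 0 \<Longrightarrow> mdet (invol c) = 1"
  by (simp add: invol_def)

lemma genA_upper: "genA = upper 1"
  by (simp add: genA_def upper_def)

lemma upper_0 [simp]: "upper 0 = mI"
  by (simp add: upper_def mI_def)

lemma upper_add [simp]: "upper s \<star> upper t = upper (s + t)"
  and madj_upper [simp]: "madj (upper t) = upper (- t)"
  and mdet_upper [simp]: "mdet (upper t) = 1"
  by (simp_all add: upper_def)

lemma genB_add [simp]: "genB s \<star> genB t = genB (s + t)"
  and madj_genB [simp]: "madj (genB t) = genB (- t)"
  and mdet_genB [simp]: "mdet (genB t) = 1"
  by (simp_all add: genB_def)

lemma mpow_upper: "mpow (upper t) n = upper (of_nat n * t)"
  by (induction n) (auto simp: algebra_simps upper_def mI_def)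

lemma mpowi_upper: "mpowi (upper t) k = upper (of_int k * t)"
  by (simp add: mpowi_def mpow_upper)

lemma mpow_genB: "mpow (genB t) n = genB (of_nat n * t)"
  by (induction n) (auto simp: algebra_simps genB_def mI_def)

lemma mpowi_genB: "mpowi (genB t) k = genB (of_int k * t)"
  by (simp add: mpowi_def mpow_genB)

lemma mpowi_genA: "mpowi genA k = upper (of_int k)"
  by (simp add: genA_upper mpowi_upper)

lemma lower_left_upper_mmul [simp]: "lower_left (upper t \<star> x) = lower_left x"
  and lower_left_mmul_upper [simp]: "lower_left (x \<star> upper t) = lower_left x"
  by (cases x; simp add: upper_def)+

lemma gam_genA: "mdet y = 1 \<Longrightarrow> gam genA y = (lower_left y)^2"
proof -
  assume det: "mdet y = 1"
  obtain p q r s where y: "y = Mat p q r s" by (cases y)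
  have "p * s - q * r = 1" using det y by simp
  then show ?thesis unfolding y by (simp add: gam_def commut_def genA_def power2_eq_square) algebra
qed

lemma mdet_genA [simp]: "mdet genA = 1"
  by (simp add: genA_def)

lemma genA_parabolic: "parabolic genA"
  by (simp add: parabolic_def SL2_def genA_def psl_eq_def mI_def)

lemma invol_elliptic2: "c \<noteq> 0 \<Longrightarrow> elliptic2 (invol c)"
  by (simp add: elliptic2_def SL2_def invol_def psl_eq_def mI_def)

lemma gam_genA_invol: "c \<noteq> 0 \<Longrightarrow> gam genA (invol c) = c^2"
  by (simp add: gam_genA invol_def)

section \<open>The word polynomial\<close>

definition ipoly :: "int poly \<Rightarrow> complex \<Rightarrow> complex" where
  "ipoly p z = poly (map_poly of_int p) z"

lemma ipoly_add [simp]: "ipoly (p + q) z = ipoly p z + ipoly q z"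
proof -
  have "map_poly (of_int :: int \<Rightarrow> complex) (p + q) = map_poly of_int p + map_poly of_int q"
    by (rule poly_eqI) (simp add: coeff_map_poly)
  then show ?thesis by (simp add: ipoly_def)
qed

lemma ipoly_mult [simp]: "ipoly (p * q) z = ipoly p z * ipoly q z"
proof -
  have "map_poly (of_int :: int \<Rightarrow> complex) (p * q) = map_poly of_int p * map_poly of_int q"
    by (rule poly_eqI) (simp add: coeff_map_poly coeff_mult)
  then show ?thesis by (simp add: ipoly_def)
qed

lemma ipoly_uminus [simp]: "ipoly (- p) z = - ipoly p z"
proof -
  have "map_poly (of_int :: int \<Rightarrow> complex) (- p) = - map_poly of_int p"
    by (rule poly_eqI) (simp add: coeff_map_poly)
  then show ?thesis by (simp add: ipoly_def)
qed

lemma ipoly_diff [simp]: "ipoly (p - q) z = ipoly p z - ipoly q z"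
  using ipoly_add[of p "- q"] by simp

lemma ipoly_smult [simp]: "ipoly (smult a p) z = of_int a * ipoly p z"
  by (simp add: ipoly_def map_poly_smult)

lemma ipoly_pCons [simp]: "ipoly (pCons a p) z = of_int a + z * ipoly p z"
  by (simp add: ipoly_def map_poly_pCons)

lemma ipoly_0 [simp]: "ipoly 0 z = 0" and ipoly_1 [simp]: "ipoly 1 z = 1"
  by (simp_all add: ipoly_def)

lemma ipoly_power [simp]: "ipoly (p ^ n) z = ipoly p z ^ n"
  by (induction n) auto

lemma map_poly_of_int_inj: "map_poly (of_int :: int \<Rightarrow> complex) p = map_poly of_int q \<Longrightarrow> p = q"
  by (metis (no_types, lifting) coeff_map_poly of_int_0 of_int_eq_iff poly_eqI)

text \<open>With \<open>z = c\<^sup>2\<close>, the matrix \<open>w(A, invol c)\<close> is \<open>[[p z, q z], [z r z, s z]]\<close> if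
  \<open>w\<close> contains an even number of involutions, and \<open>[[c p z, q z / c], [c r z, c s z]]\<close> if
  it contains an odd number, for integer polynomials \<open>p, q, r, s\<close>.\<close>

type_synonym shape = "bool \<times> int poly \<times> int poly \<times> int poly \<times> int poly"

fun word_shape :: "int list \<Rightarrow> shape" where
  "word_shape [] = (False, 1, 0, 0, 1)"
| "word_shape [m] = (False, 1, [:m:], 0, 1)"
| "word_shape (m # m' # ms) = (case word_shape (m' # ms) of (is_odd, p, q, r, s) \<Rightarrow>
     if is_odd then (False, - r + [:m:] * [:0, 1:] * p, - s + [:m:] * q, p, q)
     else (True, - r + [:m:] * p, - s + [:m:] * [:0, 1:] * q, p, q))"

fun shape_mat :: "complex \<Rightarrow> shape \<Rightarrow> mat2" where
  "shape_mat c (is_odd, p, q, r, s) = (let z = c^2 in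
     if is_odd then Mat (c * ipoly p z) (ipoly q z / c) (c * ipoly r z) (c * ipoly s z)
     else Mat (ipoly p z) (ipoly q z) (z * ipoly r z) (ipoly s z))"

definition shape_poly :: "int list \<Rightarrow> int poly" where
  "shape_poly w = (case word_shape w of (is_odd, p, q, r, s) \<Rightarrow>
     if is_odd then [:0, 1:] * r^2 else [:0, 0, 1:] * r^2)"

lemma weval_invol_shape: "c \<noteq> 0 \<Longrightarrow> weval genA (invol c) w = shape_mat c (word_shape w)"
proof (induction genA "invol c" w rule: weval.induct)
  case (3 m m' ms)
  obtain is_odd p q r s where shape: "word_shape (m' # ms) = (is_odd, p, q, r, s)"
    by (cases "word_shape (m' # ms)") auto
  then have "weval genA (invol c) (m' # ms) = shape_mat c (is_odd, p, q, r, s)"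
    using 3 by simp
  then show ?case using shape 3(2)
    by (cases is_odd; simp add: mpowi_genA upper_def invol_def Let_def)
       (simp_all add: field_simps power2_eq_square)
qed (simp_all add: mI_def mpowi_genA upper_def)

lemma lower_left_weval_invol:
  "c \<noteq> 0 \<Longrightarrow> (lower_left (weval genA (invol c) w))^2 = ipoly (shape_poly w) (c^2)"
  by (cases "word_shape w")
     (auto simp: weval_invol_shape shape_poly_def Let_def power_mult_distrib power2_eq_square)

lemma ipoly_shape_poly_0: "ipoly (shape_poly w) 0 = 0"
  by (cases "word_shape w") (auto simp: shape_poly_def)

lemma lower_left_weval_lower_triangular:
  "lower_left \<phi> = 0 \<Longrightarrow> lower_left (weval genA \<phi> w) = 0"
proof (induction genA \<phi> w rule: weval.induct)
  case (3 \<phi> m m' ms)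
  then have "lower_left (weval genA \<phi> (m' # ms)) = 0" by simp
  with 3(2) show ?case
    by (cases \<phi>; cases "weval genA \<phi> (m' # ms)") (simp add: mpowi_genA upper_def)
qed (simp_all add: mI_def mpowi_genA upper_def)

lemma lower_left_weval_trace_zero:
  assumes det: "mdet \<phi> = 1" and tr: "mtr \<phi> = 0"
  shows "(lower_left (weval genA \<phi> w))^2 = ipoly (shape_poly w) ((lower_left \<phi>)^2)"
proof -
  obtain a b c d where \<phi>: "\<phi> = Mat a b c d" by (cases \<phi>)
  have d: "d = - a" using tr \<phi> by (simp add: eq_neg_iff_add_eq_0 add.commute)
  show ?thesis
  proof (cases "c = 0")
    case True
    then show ?thesis using lower_left_weval_lower_triangular[of \<phi> w] \<phi>
      by (simp add: ipoly_shape_poly_0)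
  next
    case False
    have "upper (- a / c) \<star> \<phi> \<star> madj (upper (- a / c)) = invol c"
      using False det unfolding \<phi> d by (simp add: upper_def invol_def field_simps)
    then have "weval genA (invol c) w = upper (- a / c) \<star> weval genA \<phi> w \<star> upper (a / c)"
      using weval_conj[of "upper (- a / c)" genA \<phi> w] by (simp add: genA_upper)
    then show ?thesis
      using lower_left_weval_invol[OF False, of w] \<phi> by simp
  qed
qed

lemma trace_two_conj_genA:
  assumes det: "mdet f = 1" and tr: "mtr f = 2" and nI: "f \<noteq> mI"
  obtains g where "mdet g = 1" and "g \<star> f \<star> madj g = genA"
proof -
  obtain a b c e where f: "f = Mat a b c e" by (cases f)
  have ae: "a * e - b * c = 1" "e = 2 - a" using det tr f by (auto simp: algebra_simps)
  \<comment> \<open>the columns of \<open>h\<close> are an eigenvector \<open>v\<close> of \<open>f\<close> and a vector \<open>u\<close> with \<open>f u = u + v\<close>\<close>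
  have "\<exists>h. mdet h = 1 \<and> f \<star> h = h \<star> genA"
  proof (cases "b = 0")
    case False
    obtain k where k: "k * k = b" by (metis power2_csqrt power2_eq_square)
    with False obtain j where j: "k * j = 1" by (metis mult_zero_left right_inverse)
    define h where "h = Mat k 0 ((1 - a) * j) j"
    have "mdet h = 1" using k j by (simp add: h_def)
    moreover have "f \<star> h = h \<star> genA"
      using ae k j unfolding f h_def genA_def mmul.simps mat2.inject by algebra
    ultimately show ?thesis by blast
  next
    case True
    then have "(a - 1)^2 = 0" using ae by (simp add: power2_eq_square algebra_simps)
    then have "a = 1" "e = 1" using ae by auto
    then have c: "c \<noteq> 0" using nI True f by (auto simp: mI_def)
    obtain k where k: "k * k = - c" by (metis power2_csqrt power2_eq_square)
    with c obtain j where j: "k * j = 1" by (metis mult_zero_left neg_0_equal_iff_equal right_inverse)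
    define h where "h = Mat 0 j (c * j) 0"
    have "mdet h = 1" using k j unfolding h_def by simp algebra
    moreover have "f \<star> h = h \<star> genA"
      using \<open>a = 1\<close> \<open>e = 1\<close> True unfolding f h_def genA_def by simp
    ultimately show ?thesis by blast
  qed
  then obtain h where h: "mdet h = 1" "f \<star> h = h \<star> genA" by blast
  have "madj h \<star> f \<star> madj (madj h) = genA"
    using h by (simp add: mmul_assoc madj_mmul_cancel)
  with h(1) show thesis by (intro that[of "madj h"]) simp_all
qed

lemma parabolic_conj_genA:
  assumes "parabolic f"
  obtains g where "mdet g = 1" and "psl_eq (g \<star> f \<star> madj g) genA"
proof -
  have det: "mdet f = 1" and tr: "mtr f = 2 \<or> mtr (mneg f) = 2" and nI: "\<not> psl_eq f mI"
    using assms by (auto simp: parabolic_def SL2_def)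
  have "f \<noteq> mI" "mneg f \<noteq> mI"
    using nI unfolding psl_eq_def by (metis mneg_mneg)+
  with tr consider "mtr f = 2" "f \<noteq> mI" | "mtr (mneg f) = 2" "mneg f \<noteq> mI"
    by blast
  then show thesis
  proof cases
    case 1
    then show thesis using trace_two_conj_genA[OF det] that by (metis psl_eq_refl)
  next
    case 2
    then obtain g where g: "mdet g = 1" "g \<star> mneg f \<star> madj g = genA"
      using trace_two_conj_genA[of "mneg f"] det by (metis mdet_mneg)
    then have "g \<star> f \<star> madj g = mneg genA"
      by (metis mneg_mmul_left mneg_mmul_right mneg_mneg)
    then show thesis using that[of g] g(1) by (simp add: psl_eq_def)
  qed
qed

lemma elliptic2_mtr:
  assumes "elliptic2 \<phi>"
  shows "mtr \<phi> = 0"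
proof (rule ccontr)
  assume tr: "mtr \<phi> \<noteq> 0"
  obtain a b c d where \<phi>: "\<phi> = Mat a b c d" by (cases \<phi>)
  have det: "a * d - b * c = 1" and nI: "\<not> psl_eq \<phi> mI"
    using assms \<phi> by (auto simp: elliptic2_def SL2_def)
  obtain \<epsilon> where \<epsilon>: "\<epsilon> * \<epsilon> = 1" "\<phi> \<star> \<phi> = Mat \<epsilon> 0 0 \<epsilon>"
    using assms by (force simp: elliptic2_def psl_eq_def mI_def)
  then have "b * (a + d) = 0" "c * (a + d) = 0" "a * a + b * c = \<epsilon>" "d * d + b * c = \<epsilon>"
    by (auto simp: \<phi> algebra_simps)
  then have bc: "b = 0" "c = 0" using tr \<phi> by auto
  then have "a * d = 1" "a * a = \<epsilon>" using det \<open>a * a + b * c = \<epsilon>\<close> by auto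
  then have "a * (d - \<epsilon> * a) = 0" using \<epsilon>(1) by (simp add: algebra_simps)
  then have d: "d = \<epsilon> * a" using \<open>a * d = 1\<close> by auto
  consider "\<epsilon> = 1" | "\<epsilon> = -1" using \<epsilon>(1) by (metis mult_cancel_left1 square_eq_1_iff)
  then show False
  proof cases
    case 1
    then have "a = 1 \<or> a = -1" using \<open>a * a = \<epsilon>\<close> by (metis power2_eq_1_iff power2_eq_square)
    then show False using nI \<phi> bc d 1 by (auto simp: psl_eq_def mI_def)
  next
    case 2
    then show False using tr \<phi> d by simp
  qed
qed

lemma is_word_poly_shape_poly: "is_word_poly w (shape_poly w)"
  unfolding is_word_poly_def
proof (intro allI impI)
  fix f \<phi> assume f: "parabolic f" and \<phi>: "elliptic2 \<phi>"
  obtain g where g: "mdet g = 1" "psl_eq (g \<star> f \<star> madj g) genA"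
    using parabolic_conj_genA[OF f] by blast
  define \<phi>' where "\<phi>' = g \<star> \<phi> \<star> madj g"
  have det: "mdet \<phi>' = 1"
    using \<phi> g(1) by (simp add: \<phi>'_def elliptic2_def SL2_def)
  have tr: "mtr \<phi>' = 0"
    using elliptic2_mtr[OF \<phi>] g(1) by (simp add: \<phi>'_def mtr_conj)
  have conj: "gam f \<psi> = gam genA (g \<star> \<psi> \<star> madj g)" for \<psi>
  proof -
    have "gam f \<psi> = gam (g \<star> f \<star> madj g) (g \<star> \<psi> \<star> madj g)"
      by (simp add: gam_conj[OF g(1)])
    then show ?thesis using g(2) by (auto simp: psl_eq_def)
  qed
  have "g \<star> weval f \<phi> w \<star> madj g = weval (g \<star> f \<star> madj g) \<phi>' w"
    by (simp add: \<phi>'_def weval_conj[OF g(1)])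
  moreover have "gam genA (weval (g \<star> f \<star> madj g) \<phi>' w) = gam genA (weval genA \<phi>' w)"
    using g(2) gam_psl_eq[OF weval_mneg] by (auto simp: psl_eq_def)
  ultimately have "gam f (weval f \<phi> w) = (lower_left (weval genA \<phi>' w))^2"
    using conj det by (simp add: gam_genA mdet_weval)
  moreover have "gam f \<phi> = (lower_left \<phi>')^2"
    using conj det by (simp add: gam_genA \<phi>'_def)
  ultimately show "gam f (weval f \<phi> w) = poly (map_poly of_int (shape_poly w)) (gam f \<phi>)"
    using lower_left_weval_trace_zero[OF det tr, of w] by (simp add: ipoly_def)
qed

lemma is_word_poly_unique:
  assumes p: "is_word_poly w p" and q: "is_word_poly w q"
  shows "p = q"
proof -
  define p' where "p' = (map_poly of_int p :: complex poly)"
  define q' where "q' = (map_poly of_int q :: complex poly)"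
  have agree: "poly p' z = poly q' z" if "z \<noteq> 0" for z
  proof -
    have c: "csqrt z \<noteq> 0" "gam genA (invol (csqrt z)) = z"
      using that by (auto simp: gam_genA_invol)
    show ?thesis
      using p q genA_parabolic invol_elliptic2[OF c(1)] c(2)
      unfolding is_word_poly_def p'_def q'_def by metis
  qed
  have "p' = q'"
  proof (rule ccontr)
    assume "p' \<noteq> q'"
    then have "finite {z. poly (p' - q') z = 0}" by (intro poly_roots_finite) simp
    moreover have "- {0} \<subseteq> {z. poly (p' - q') z = 0}" using agree by auto
    ultimately have "finite (- {0 :: complex})" by (rule finite_subset[rotated])
    then show False using finite_compl[of "{0 :: complex}"] infinite_UNIV_char_0[where 'a = complex] by simp
  qed
  then show ?thesis unfolding p'_def q'_def by (rule map_poly_of_int_inj)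
qed

lemma word_poly_eq: "word_poly w = shape_poly w"
  unfolding word_poly_def using is_word_poly_shape_poly is_word_poly_unique by blast

lemma wpoly_invol:
  "c \<noteq> 0 \<Longrightarrow> wpoly w (c^2) = (lower_left (weval genA (invol c) w))^2"
  by (simp add: wpoly_def word_poly_eq lower_left_weval_invol ipoly_def)

section \<open>Words in the generators of \<open>\<Gamma>\<^sub>\<delta>\<close>\<close>

fun reduced :: "(bool \<times> int) list \<Rightarrow> bool" where
  "reduced [] = True"
| "reduced [x] = (snd x \<noteq> 0)"
| "reduced (x # y # xs) = (snd x \<noteq> 0 \<and> fst x \<noteq> fst y \<and> reduced (y # xs))"

lemma reduced_Cons:
  "reduced (x # xs) \<longleftrightarrow> snd x \<noteq> 0 \<and> (xs \<noteq> [] \<longrightarrow> fst x \<noteq> fst (hd xs)) \<and> reduced xs"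
  by (cases xs) auto

lemma reduced_iff_nth:
  "reduced ws \<longleftrightarrow> (\<forall>x\<in>set ws. snd x \<noteq> 0) \<and>
     (\<forall>i. i + 1 < length ws \<longrightarrow> fst (ws ! i) \<noteq> fst (ws ! (i + 1)))"
proof (induction ws rule: reduced.induct)
  case (3 x y xs)
  have "(\<forall>i. i + 1 < length (x # y # xs) \<longrightarrow>
          fst ((x # y # xs) ! i) \<noteq> fst ((x # y # xs) ! (i + 1))) \<longleftrightarrow>
        fst x \<noteq> fst y \<and>
        (\<forall>i. i + 1 < length (y # xs) \<longrightarrow> fst ((y # xs) ! i) \<noteq> fst ((y # xs) ! (i + 1)))"
    by (auto simp: less_Suc_eq_0_disj)
  with 3 show ?case by auto
qed simp_all

lemma reduced_fword_iff: "reduced_fword ws \<longleftrightarrow> ws \<noteq> [] \<and> reduced ws"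
  by (simp add: reduced_fword_def reduced_iff_nth)

lemma reduced_append:
  assumes "reduced xs" and "reduced ys"
    and "xs \<noteq> [] \<Longrightarrow> ys \<noteq> [] \<Longrightarrow> fst (last xs) \<noteq> fst (hd ys)"
  shows "reduced (xs @ ys)"
  using assms by (induction xs rule: reduced.induct) (auto simp: reduced_Cons)

lemma reduced_snoc:
  "reduced (xs @ [x]) \<longleftrightarrow> reduced xs \<and> snd x \<noteq> 0 \<and> (xs \<noteq> [] \<longrightarrow> fst (last xs) \<noteq> fst x)"
  by (induction xs rule: reduced.induct) (auto simp: reduced_Cons)

definition syllable :: "complex \<Rightarrow> bool \<Rightarrow> int \<Rightarrow> mat2" where
  "syllable \<delta> x e = (if x then upper (of_int e) else genB (of_int e * \<delta>))"

lemma feval_Cons: "feval \<delta> (a # ws) = syllable \<delta> (fst a) (snd a) \<star> feval \<delta> ws"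
  by (cases a) (simp add: syllable_def genA_upper mpowi_upper mpowi_genB)

declare feval.simps(2) [simp del]

lemma feval_single: "feval \<delta> [(x, e)] = syllable \<delta> x e"
  by (simp add: feval_Cons)

lemma feval_append: "feval \<delta> (xs @ ys) = feval \<delta> xs \<star> feval \<delta> ys"
  by (induction xs) (auto simp: feval_Cons mmul_assoc)

lemma syllable_mmul: "syllable \<delta> x e \<star> syllable \<delta> x f = syllable \<delta> x (e + f)"
  by (simp add: syllable_def algebra_simps)

lemma syllable_add: "syllable \<delta> x e \<star> (syllable \<delta> x f \<star> z) = syllable \<delta> x (e + f) \<star> z"
  by (simp add: syllable_mmul flip: mmul_assoc)

lemma syllable_0 [simp]: "syllable \<delta> x 0 = mI"
  and mdet_syllable [simp]: "mdet (syllable \<delta> x e) = 1"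
  and madj_syllable: "madj (syllable \<delta> x e) = syllable \<delta> x (- e)"
  by (simp_all add: syllable_def upper_def genB_def mI_def)

lemma mpowi_syllable: "mpowi (syllable \<delta> x e) k = syllable \<delta> x (k * e)"
  by (simp add: syllable_def mpowi_upper mpowi_genB algebra_simps)

lemma mdet_feval [simp]: "mdet (feval \<delta> ws) = 1"
  by (induction ws) (auto simp: feval_Cons)

lemma syllable_nontrivial: "\<delta> \<noteq> 0 \<Longrightarrow> e \<noteq> 0 \<Longrightarrow> \<not> psl_eq (syllable \<delta> x e) mI"
  by (cases x) (auto simp: syllable_def psl_eq_def upper_def genB_def mI_def)

definition winv :: "(bool \<times> int) list \<Rightarrow> (bool \<times> int) list" where
  "winv ws = rev (map (\<lambda>(x, e). (x, - e)) ws)"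

lemma winv_Nil [simp]: "winv [] = []"
  and winv_Cons: "winv (a # ws) = winv ws @ [(fst a, - snd a)]"
  and length_winv [simp]: "length (winv ws) = length ws"
  and winv_eq_Nil_iff [simp]: "winv ws = [] \<longleftrightarrow> ws = []"
  by (auto simp: winv_def split: prod.split)

lemma feval_winv: "feval \<delta> (winv ws) = madj (feval \<delta> ws)"
  by (induction ws) (auto simp: winv_Cons feval_append feval_Cons madj_mmul madj_syllable feval_single)

lemma hd_winv: "ws \<noteq> [] \<Longrightarrow> fst (hd (winv ws)) = fst (last ws)"
  by (simp add: winv_def hd_rev last_map split: prod.splits)

lemma last_winv: "ws \<noteq> [] \<Longrightarrow> fst (last (winv ws)) = fst (hd ws)"
  by (cases ws) (auto simp: winv_def last_rev split: prod.splits)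

lemma reduced_winv: "reduced ws \<Longrightarrow> reduced (winv ws)"
  by (induction ws) (auto simp: winv_Cons reduced_snoc reduced_Cons last_winv)

lemma Gamma_free_reduced:
  "Gamma_free \<delta> \<Longrightarrow> reduced ws \<Longrightarrow> ws \<noteq> [] \<Longrightarrow> \<not> psl_eq (feval \<delta> ws) mI"
  unfolding Gamma_free_def reduced_fword_iff by blast

lemma Gamma_free_nonzero: "Gamma_free \<delta> \<Longrightarrow> \<delta> \<noteq> 0"
  using Gamma_free_reduced[of \<delta> "[(False, 1)]"] by (auto simp: feval_single syllable_def genB_def mI_def)

lemma Gamma_free_same_head:
  assumes free: "Gamma_free \<delta>" and u: "reduced (a # u)" and v: "reduced (b # v)"
    and eq: "psl_eq (feval \<delta> (a # u)) (feval \<delta> (b # v))"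
  shows "a = b"
proof (rule ccontr)
  assume "a \<noteq> b"
  obtain x e y f where ab: "a = (x, e)" "b = (y, f)" by (cases a, cases b)
  have rel: "psl_eq (feval \<delta> (winv v @ [(y, - f), (x, e)] @ u)) mI"
    using psl_eq_imp_mI[OF mdet_feval eq]
    by (simp add: ab feval_append feval_winv winv_Cons feval_Cons madj_mmul madj_syllable mmul_assoc)
  have v': "reduced (winv v)" "v \<noteq> [] \<Longrightarrow> fst (last (winv v)) \<noteq> y"
    using v by (auto simp: ab reduced_Cons reduced_winv last_winv)
  have u': "reduced u" "u \<noteq> [] \<Longrightarrow> fst (hd u) \<noteq> x" "e \<noteq> 0" "f \<noteq> 0"
    using u v by (auto simp: ab reduced_Cons)
  show False
  proof (cases "x = y")
    case False
    have "reduced (winv v @ [(y, - f), (x, e)] @ u)"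
      using v' u' False by (intro reduced_append) (auto simp: reduced_Cons)
    with rel show False using Gamma_free_reduced[OF free] by simp
  next
    case True
    with \<open>a \<noteq> b\<close> ab have "e - f \<noteq> 0" by simp
    have "feval \<delta> (winv v @ [(y, - f), (x, e)] @ u) = feval \<delta> (winv v @ [(x, e - f)] @ u)"
      using True by (simp add: feval_append feval_Cons syllable_add)
    moreover have "reduced (winv v @ [(x, e - f)] @ u)"
      using v' u' True \<open>e - f \<noteq> 0\<close> by (intro reduced_append) (auto simp: reduced_Cons)
    ultimately show False using rel Gamma_free_reduced[OF free] by fastforce
  qed
qed

lemma Gamma_free_reduced_unique:
  assumes free: "Gamma_free \<delta>"
  shows "reduced u \<Longrightarrow> reduced v \<Longrightarrow> psl_eq (feval \<delta> u) (feval \<delta> v) \<Longrightarrow> u = v"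
proof (induction u arbitrary: v)
  case Nil
  then show ?case using Gamma_free_reduced[OF free, of v] by (auto intro: psl_eq_sym)
next
  case (Cons a u)
  then obtain b v' where v: "v = b # v'"
    using Gamma_free_reduced[OF free, of "a # u"] by (cases v) auto
  with Cons.prems have "a = b" by (intro Gamma_free_same_head[OF free]) auto
  with Cons.prems v have "psl_eq (feval \<delta> u) (feval \<delta> v')"
    by (auto simp: feval_Cons intro: psl_eq_cancel_left[OF mdet_syllable])
  with Cons v \<open>a = b\<close> show ?case by (auto simp: reduced_Cons)
qed

lemma reduced_word_exists: "\<exists>v'. reduced v' \<and> feval \<delta> v' = feval \<delta> v"
proof (induction v)
  case Nil
  show ?case by (intro exI[of _ "[]"]) simp
next
  case (Cons a v)
  then obtain v' where v': "reduced v'" "feval \<delta> v' = feval \<delta> v" by blast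
  consider "snd a = 0" | "snd a \<noteq> 0" "v' = [] \<or> fst (hd v') \<noteq> fst a"
    | b v'' where "snd a \<noteq> 0" "v' = b # v''" "fst b = fst a"
    by (cases v') auto
  then show ?case
  proof cases
    case 1
    then show ?thesis using v' by (intro exI[of _ v']) (simp add: feval_Cons)
  next
    case 2
    then show ?thesis using v' by (intro exI[of _ "a # v'"]) (auto simp: feval_Cons reduced_Cons)
  next
    case (3 b v'')
    have merged: "feval \<delta> (a # v) = syllable \<delta> (fst a) (snd a + snd b) \<star> feval \<delta> v''"
      using v'(2)[symmetric] 3 by (simp add: feval_Cons syllable_add)
    have v'': "reduced v''" "v'' \<noteq> [] \<Longrightarrow> fst a \<noteq> fst (hd v'')"
      using v'(1) 3 by (auto simp: reduced_Cons)
    show ?thesis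
    proof (cases "snd a + snd b = 0")
      case True
      then show ?thesis using merged v'' by (intro exI[of _ v'']) simp
    next
      case False
      then show ?thesis using merged v''
        by (intro exI[of _ "(fst a, snd a + snd b) # v''"]) (auto simp: feval_Cons reduced_Cons)
    qed
  qed
qed

section \<open>A relation in \<open>\<Gamma>\<^sub>\<gamma>\<close> gives a fixed point of a word polynomial\<close>

lemma relator_shorten:
  assumes red: "reduced ws" and len: "2 \<le> length ws" and ends: "fst (hd ws) = fst (last ws)"
    and rel: "psl_eq (feval \<delta> ws) mI"
  obtains ws' where "reduced ws'" "ws' \<noteq> []" "length ws' < length ws" "psl_eq (feval \<delta> ws') mI"
proof -
  obtain a rest where "ws = a # rest" "rest \<noteq> []" using len by (cases ws) (auto simp: Suc_le_eq)
  then obtain mid b where ws: "ws = a # mid @ [b]" by (metis append_butlast_last_id)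
  have b: "fst b = fst a" using ends ws by simp
  have mid: "mid \<noteq> []" using red ws b by (auto simp: reduced_Cons)
  have red_mid: "reduced mid" "fst (last mid) \<noteq> fst a"
    using red ws mid b by (auto simp: reduced_Cons reduced_snoc)
  have "psl_eq (syllable \<delta> (fst a) (snd a) \<star> (feval \<delta> mid \<star> syllable \<delta> (fst a) (snd b))) mI"
    using rel ws b by (simp add: feval_Cons feval_append feval_single)
  then have "psl_eq (feval \<delta> mid \<star> syllable \<delta> (fst a) (snd b) \<star> syllable \<delta> (fst a) (snd a)) mI"
    by (rule psl_eq_mI_rotate[OF mdet_syllable])
  then have rotated: "psl_eq (feval \<delta> (mid @ [(fst a, snd b + snd a)])) mI"
    by (simp add: mmul_assoc syllable_mmul feval_append feval_single)
  show thesis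
  proof (cases "snd b + snd a = 0")
    case True
    with rotated have "psl_eq (feval \<delta> mid) mI" by (simp add: feval_append feval_single)
    with that[of mid] red_mid mid ws show thesis by simp
  next
    case False
    with that[of "mid @ [(fst a, snd b + snd a)]"] rotated red_mid ws show thesis
      by (simp add: reduced_snoc)
  qed
qed

lemma relator_B_first_A_last:
  assumes "\<delta> \<noteq> 0"
  shows "reduced ws \<Longrightarrow> ws \<noteq> [] \<Longrightarrow> psl_eq (feval \<delta> ws) mI \<Longrightarrow>
    \<exists>ws'. reduced ws' \<and> ws' \<noteq> [] \<and> psl_eq (feval \<delta> ws') mI \<and> \<not> fst (hd ws') \<and> fst (last ws')"
proof (induction "length ws" arbitrary: ws rule: less_induct)
  case less
  obtain a rest where ws: "ws = a # rest" using less.prems(2) by (cases ws) auto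
  have rest: "rest \<noteq> []"
    using less.prems syllable_nontrivial[OF assms, of "snd a" "fst a"]
    by (auto simp: ws feval_Cons reduced_Cons)
  show ?case
  proof (cases "fst a = fst (last ws)")
    case True
    have "2 \<le> length ws" using rest ws by (cases rest) auto
    moreover have "fst (hd ws) = fst (last ws)" using True ws by simp
    ultimately obtain ws' where
      "reduced ws'" "ws' \<noteq> []" "length ws' < length ws" "psl_eq (feval \<delta> ws') mI"
      using relator_shorten less.prems(1,3) by blast
    with less.hyps show ?thesis by blast
  next
    case False
    show ?thesis
    proof (cases "fst a")
      case A: True
      have "reduced (rest @ [a])"
        using less.prems(1) False rest by (intro reduced_append) (auto simp: ws reduced_Cons)
      moreover have "psl_eq (feval \<delta> (rest @ [a])) mI"
        using psl_eq_mI_rotate[of "syllable \<delta> (fst a) (snd a)" "feval \<delta> rest"] less.prems(3)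
        by (simp add: ws feval_append feval_Cons feval_single)
      moreover have "\<not> fst (hd (rest @ [a]))"
        using less.prems(1) rest A by (auto simp: ws reduced_Cons)
      ultimately show ?thesis using A by (intro exI[of _ "rest @ [a]"]) simp
    next
      case False
      with \<open>fst a \<noteq> fst (last ws)\<close> less.prems show ?thesis by (auto simp: ws)
    qed
  qed
qed

definition BA_word :: "(int \<times> int) list \<Rightarrow> (bool \<times> int) list" where
  "BA_word ps = concat (map (\<lambda>(f, e). [(False, f), (True, e)]) ps)"

lemma BA_word_Nil [simp]: "BA_word [] = []"
  and BA_word_Cons: "BA_word ((f, e) # ps) = (False, f) # (True, e) # BA_word ps"
  by (simp_all add: BA_word_def)

lemma BA_word_exists:
  "reduced ws \<Longrightarrow> ws \<noteq> [] \<Longrightarrow> \<not> fst (hd ws) \<Longrightarrow> fst (last ws) \<Longrightarrow>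
   \<exists>ps. ps \<noteq> [] \<and> ws = BA_word ps \<and> (\<forall>(f, e)\<in>set ps. f \<noteq> 0 \<and> e \<noteq> 0)"
proof (induction "length ws" arbitrary: ws rule: less_induct)
  case less
  obtain f rest where ws: "ws = (False, f) # rest" using less.prems(2,3)
    by (cases ws) auto
  obtain b rest' where rest: "rest = b # rest'" using less.prems(2,4) ws by (cases rest) auto
  obtain e where b: "b = (True, e)" and fe: "f \<noteq> 0" "e \<noteq> 0" and rest': "reduced rest'"
    "rest' \<noteq> [] \<Longrightarrow> \<not> fst (hd rest')"
    using less.prems(1) ws rest by (cases b) (auto simp: reduced_Cons)
  show ?case
  proof (cases "rest' = []")
    case True
    then show ?thesis using ws rest b fe by (intro exI[of _ "[(f, e)]"]) (simp add: BA_word_Cons)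
  next
    case False
    then obtain ps where "ps \<noteq> []" "rest' = BA_word ps" "\<forall>(f, e)\<in>set ps. f \<noteq> 0 \<and> e \<noteq> 0"
      using less.hyps[of rest'] less.prems(4) ws rest rest' by auto
    then show ?thesis using ws rest b fe by (intro exI[of _ "(f, e) # ps"]) (simp add: BA_word_Cons)
  qed
qed

definition pairs_good_word :: "(int \<times> int) list \<Rightarrow> int list" where
  "pairs_good_word ps = 0 # concat (map (\<lambda>(f, e). [- f, e]) ps) @ [0]"

lemma good_word_pairs_good_word:
  assumes "ps \<noteq> []" and "\<forall>(f, e)\<in>set ps. f \<noteq> 0 \<and> e \<noteq> 0"
  shows "good_word (pairs_good_word ps)"
proof -
  define L where "L = concat (map (\<lambda>(f, e). [- f, e]) ps)"
  have "length L = 2 * length ps" unfolding L_def by (induction ps) auto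
  then have len: "length (pairs_good_word ps) = 2 * length ps + 2"
    by (simp add: pairs_good_word_def L_def)
  have nonzero: "\<forall>x\<in>set L. x \<noteq> 0" using assms(2) unfolding L_def by auto
  show ?thesis unfolding good_word_def
  proof (intro conjI allI impI)
    show "3 \<le> length (pairs_good_word ps)" using len assms(1) by (cases ps) auto
  next
    fix i assume i: "1 \<le> i \<and> i < length (pairs_good_word ps) - 1"
    then have "pairs_good_word ps ! i = L ! (i - 1)" "i - 1 < length L"
      using len \<open>length L = _\<close>
      by (auto simp: pairs_good_word_def L_def[symmetric] nth_append nth_Cons')
    then show "pairs_good_word ps ! i \<noteq> 0" using nonzero by (simp add: nth_mem)
  qed
qed

lemma invol_upper_invol:
  "c \<noteq> 0 \<Longrightarrow> invol c \<star> (upper t \<star> (invol c \<star> z)) = mneg (genB (- t * c^2) \<star> z)"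
proof -
  assume "c \<noteq> 0"
  then have "invol c \<star> upper t \<star> invol c = mneg (genB (- t * c^2))"
    by (simp add: invol_def upper_def genB_def field_simps power2_eq_square)
  then show ?thesis by (metis mmul_assoc mneg_mmul_left)
qed

lemma weval_pairs_good_word:
  assumes c: "c \<noteq> 0"
  shows "psl_eq (weval genA (invol c) (pairs_good_word ps)) (feval (c^2) (BA_word ps) \<star> invol c)"
proof (induction ps)
  case Nil
  then show ?case by (simp add: pairs_good_word_def)
next
  case (Cons p ps)
  obtain f e where p: "p = (f, e)" by (cases p)
  define T where "T = concat (map (\<lambda>(f, e). [- f, e]) ps) @ [0]"
  have T: "T \<noteq> []" and ps: "pairs_good_word ps = 0 # T"
    by (simp_all add: T_def pairs_good_word_def)
  have "weval genA (invol c) (pairs_good_word (p # ps)) =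
        invol c \<star> (upper (- of_int f) \<star> (invol c \<star> (upper (of_int e) \<star> (invol c \<star> weval genA (invol c) T))))"
    using T by (simp add: p T_def pairs_good_word_def weval_Cons mpowi_genA)
  also have "\<dots> = mneg (genB (of_int f * c^2) \<star> (upper (of_int e) \<star> weval genA (invol c) (pairs_good_word ps)))"
    using invol_upper_invol[OF c, of "- of_int f" "upper (of_int e) \<star> (invol c \<star> weval genA (invol c) T)"]
    by (simp add: ps weval_Cons[OF T])
  finally have "psl_eq (weval genA (invol c) (pairs_good_word (p # ps)))
       (genB (of_int f * c^2) \<star> upper (of_int e) \<star> weval genA (invol c) (pairs_good_word ps))"
    by (simp add: mmul_assoc)
  also have "psl_eq \<dots> (genB (of_int f * c^2) \<star> upper (of_int e) \<star> (feval (c^2) (BA_word ps) \<star> invol c))"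
    using Cons.IH by (intro psl_eq_mmul psl_eq_refl)
  finally show ?case
    by (simp add: p BA_word_Cons feval_Cons syllable_def mmul_assoc)
qed

lemma not_free_fixed_point:
  assumes "\<gamma> \<noteq> 0" and "\<not> Gamma_free \<gamma>"
  shows "\<exists>w. good_word w \<and> wpoly w \<gamma> = \<gamma>"
proof -
  obtain ws where "reduced ws" "ws \<noteq> []" "psl_eq (feval \<gamma> ws) mI"
    using assms(2) by (auto simp: Gamma_free_def reduced_fword_iff)
  then obtain ws' where ws': "reduced ws'" "ws' \<noteq> []" "psl_eq (feval \<gamma> ws') mI"
    "\<not> fst (hd ws')" "fst (last ws')"
    using relator_B_first_A_last[OF assms(1)] by blast
  then obtain ps where ps: "ps \<noteq> []" "ws' = BA_word ps" "\<forall>(f, e)\<in>set ps. f \<noteq> 0 \<and> e \<noteq> 0"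
    using BA_word_exists by blast
  define c where "c = csqrt \<gamma>"
  have c: "c^2 = \<gamma>" "c \<noteq> 0" using assms(1) by (auto simp: c_def)
  have "psl_eq (feval (c^2) (BA_word ps) \<star> invol c) (mI \<star> invol c)"
    using ws'(3) ps(2) c(1) by (intro psl_eq_mmul psl_eq_refl) simp
  then have "psl_eq (weval genA (invol c) (pairs_good_word ps)) (invol c)"
    using weval_pairs_good_word[OF c(2)] psl_eq_trans by fastforce
  then have "(lower_left (weval genA (invol c) (pairs_good_word ps)))^2 = c^2"
    by (cases "weval genA (invol c) (pairs_good_word ps)") (auto simp: psl_eq_def invol_def)
  then have "wpoly (pairs_good_word ps) \<gamma> = \<gamma>" using wpoly_invol[OF c(2)] c(1) by simp
  then show ?thesis using good_word_pairs_good_word[OF ps(1,3)] by blast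
qed

section \<open>A good word embeds \<open>\<Gamma>\<^bsub>p\<^sub>w(\<delta>)\<^esub>\<close> into a free \<open>\<Gamma>\<^sub>\<delta>\<close>\<close>

fun swap_syllable :: "bool \<times> int \<Rightarrow> bool \<times> int" where
  "swap_syllable (x, e) = (\<not> x, - e)"

lemma fst_swap_syllable [simp]: "fst (swap_syllable a) = (\<not> fst a)"
  and snd_swap_syllable [simp]: "snd (swap_syllable a) = - snd a"
  by (cases a; simp)+

lemma reduced_map_swap_syllable [simp]: "reduced (map swap_syllable ws) = reduced ws"
  by (induction ws rule: reduced.induct) auto

lemma winv_map_swap_syllable: "winv (map swap_syllable ws) = map swap_syllable (winv ws)"
  by (induction ws) (auto simp: winv_Cons)

lemma invol_conj_syllable:
  "c \<noteq> 0 \<Longrightarrow> invol c \<star> syllable (c^2) x e \<star> madj (invol c) = syllable (c^2) (\<not> x) (- e)"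
  by (cases x) (simp_all add: syllable_def invol_def upper_def genB_def field_simps power2_eq_square)

lemma invol_conj_feval:
  "c \<noteq> 0 \<Longrightarrow> invol c \<star> feval (c^2) ws \<star> madj (invol c) = feval (c^2) (map swap_syllable ws)"
proof (induction ws)
  case Nil
  then show ?case by (simp add: mmul_madj_self)
next
  case (Cons a ws)
  then have "invol c \<star> feval (c^2) (a # ws) \<star> madj (invol c) =
     (invol c \<star> syllable (c^2) (fst a) (snd a) \<star> madj (invol c)) \<star>
     (invol c \<star> feval (c^2) ws \<star> madj (invol c))"
    by (simp only: feval_Cons conj_mmul[OF mdet_invol[OF Cons.prems]])
  with Cons show ?case by (simp add: invol_conj_syllable feval_Cons)
qed

text \<open>For a middle part \<open>ms = [m\<^sub>1, \<dots>, m\<^sub>k]\<close> of a good word, the matrix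
  \<open>V = \<phi> A\<^bsup>m\<^sub>1\<^esup> \<phi> \<dots> \<phi> A\<^bsup>m\<^sub>k\<^esup> \<phi>\<close> with \<open>\<phi> = invol c\<close> conjugates \<open>A\<^sup>-\<^sup>1\<close> into
  \<open>\<Gamma>\<^bsub>c\<^sup>2\<^esub>\<close>, because \<open>\<phi>\<close> conjugates \<open>A\<^sup>m\<close> to \<open>B\<^sup>-\<^sup>m\<close> and \<open>B\<^sup>m\<close> to \<open>A\<^sup>-\<^sup>m\<close>; \<open>conj_word ms\<close>
  is the resulting word for \<open>V A\<^sup>-\<^sup>1 V\<^sup>-\<^sup>1\<close>.\<close>

fun conj_prefix :: "int list \<Rightarrow> (bool \<times> int) list" where
  "conj_prefix [] = []"
| "conj_prefix (m # ms) = map swap_syllable ((True, m) # conj_prefix ms)"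

definition conj_centre :: "int list \<Rightarrow> bool \<times> int" where
  "conj_centre ms = (if even (length ms) then (False, 1) else (True, -1))"

definition conj_word :: "int list \<Rightarrow> (bool \<times> int) list" where
  "conj_word ms = conj_prefix ms @ [conj_centre ms] @ winv (conj_prefix ms)"

definition middle_mat :: "complex \<Rightarrow> int list \<Rightarrow> mat2" where
  "middle_mat c ms = weval genA (invol c) (0 # ms @ [0])"

lemma conj_centre_Cons: "conj_centre (m # ms) = swap_syllable (conj_centre ms)"
  by (simp add: conj_centre_def)

lemma middle_mat_Nil: "middle_mat c [] = invol c"
  by (simp add: middle_mat_def)

lemma middle_mat_Cons: "middle_mat c (m # ms) = invol c \<star> (upper (of_int m) \<star> middle_mat c ms)"
  by (cases ms) (simp_all add: middle_mat_def mpowi_genA weval_Cons)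

lemma feval_conj_word:
  "c \<noteq> 0 \<Longrightarrow> feval (c^2) (conj_word ms) = middle_mat c ms \<star> upper (-1) \<star> madj (middle_mat c ms)"
proof (induction ms)
  case Nil
  then show ?case
    using invol_conj_syllable[OF Nil, of True "-1"]
    by (simp add: conj_word_def conj_centre_def middle_mat_Nil feval_single syllable_def)
next
  case (Cons m ms)
  have "conj_word (m # ms) = map swap_syllable ([(True, m)] @ conj_word ms @ [(True, - m)])"
    by (simp add: conj_word_def conj_centre_Cons winv_map_swap_syllable winv_Cons)
  then have "feval (c^2) (conj_word (m # ms)) =
      invol c \<star> feval (c^2) ([(True, m)] @ conj_word ms @ [(True, - m)]) \<star> madj (invol c)"
    using invol_conj_feval[OF Cons.prems] by simp
  also have "\<dots> = invol c \<star> (upper (of_int m) \<star> feval (c^2) (conj_word ms) \<star> upper (- of_int m)) \<star> madj (invol c)"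
    by (simp only: feval_append feval_single syllable_def if_True of_int_minus mmul_assoc)
  also have "\<dots> = middle_mat c (m # ms) \<star> upper (-1) \<star> madj (middle_mat c (m # ms))"
    using Cons by (simp add: middle_mat_Cons madj_mmul mmul_assoc)
  finally show ?case .
qed

definition subst_syllable :: "int list \<Rightarrow> bool \<times> int \<Rightarrow> (bool \<times> int) list" where
  "subst_syllable ms a = (if fst a then [a] else
     conj_prefix ms @ [(fst (conj_centre ms), snd (conj_centre ms) * snd a)] @ winv (conj_prefix ms))"

definition subst_word :: "int list \<Rightarrow> (bool \<times> int) list \<Rightarrow> (bool \<times> int) list" where
  "subst_word ms v = concat (map (subst_syllable ms) v)"

lemma subst_word_Nil [simp]: "subst_word ms [] = []"
  and subst_word_Cons: "subst_word ms (a # v) = subst_syllable ms a @ subst_word ms v"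
  by (simp_all add: subst_word_def)

definition uconj :: "complex \<Rightarrow> mat2 \<Rightarrow> mat2" where
  "uconj t M = upper t \<star> M \<star> upper (- t)"

lemma uconj_mmul: "uconj t (x \<star> y) = uconj t x \<star> uconj t y"
  using conj_mmul[of "upper t" x y] by (simp add: uconj_def)

lemma uconj_uconj [simp]: "uconj s (uconj t M) = uconj (s + t) M"
  by (simp add: uconj_def flip: mmul_assoc) (simp add: mmul_assoc add.commute)

lemma uconj_0 [simp]: "uconj 0 M = M"
  by (simp add: uconj_def upper_def mI_def[symmetric])

lemma psl_eq_uconj: "psl_eq x y \<Longrightarrow> psl_eq (uconj t x) (uconj t y)"
  by (auto simp: psl_eq_def uconj_def)

lemma uconj_feval_subst_word:
  assumes B: "uconj t (genB \<delta>') = feval \<delta> (conj_word ms)"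
  shows "uconj t (feval \<delta>' v) = feval \<delta> (subst_word ms v)"
proof (induction v)
  case (Cons a v)
  have "uconj t (syllable \<delta>' (fst a) (snd a)) = feval \<delta> (subst_syllable ms a)"
  proof (cases "fst a")
    case True
    then show ?thesis by (cases a) (simp add: uconj_def syllable_def subst_syllable_def feval_single)
  next
    case False
    let ?P = "feval \<delta> (conj_prefix ms)"
    have "uconj t (syllable \<delta>' (fst a) (snd a)) = mpowi (uconj t (genB \<delta>')) (snd a)"
      using False mpowi_conj[of "upper t" "genB \<delta>'" "snd a"]
      by (simp add: syllable_def mpowi_genB uconj_def)
    also have "\<dots> = mpowi (?P \<star> syllable \<delta> (fst (conj_centre ms)) (snd (conj_centre ms)) \<star> madj ?P) (snd a)"
      using B by (simp add: conj_word_def feval_append feval_Cons feval_winv mmul_assoc)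
    also have "\<dots> = ?P \<star> syllable \<delta> (fst (conj_centre ms)) (snd a * snd (conj_centre ms)) \<star> madj ?P"
      by (simp add: mpowi_conj mpowi_syllable)
    also have "\<dots> = feval \<delta> (subst_syllable ms a)"
      using False
      by (simp add: subst_syllable_def feval_append feval_Cons feval_winv mmul_assoc mult.commute)
    finally show ?thesis .
  qed
  with Cons show ?case by (simp add: feval_Cons subst_word_Cons feval_append uconj_mmul)
qed (simp add: uconj_def)

locale good_middle =
  fixes ms :: "int list"
  assumes ms_ne: "ms \<noteq> []" and ms_nonzero: "0 \<notin> set ms"
begin

lemma conj_prefix_shape:
  "reduced (conj_prefix ms)" "conj_prefix ms \<noteq> []" "\<not> fst (hd (conj_prefix ms))"
  "fst (last (conj_prefix ms)) \<noteq> fst (conj_centre ms)"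
proof -
  have "0 \<notin> set ns \<Longrightarrow> reduced (conj_prefix ns) \<and>
      (ns \<noteq> [] \<longrightarrow> \<not> fst (hd (conj_prefix ns)) \<and> fst (last (conj_prefix ns)) \<noteq> fst (conj_centre ns))"
    for ns
  proof (induction ns)
    case (Cons m ns)
    have "reduced ((True, m) # conj_prefix ns)"
      using Cons by (cases ns) (auto simp: reduced_Cons)
    then have "reduced (conj_prefix (m # ns))"
      by (simp only: conj_prefix.simps reduced_map_swap_syllable)
    moreover have "fst (last (conj_prefix (m # ns))) \<noteq> fst (conj_centre (m # ns))"
      using Cons by (cases ns) (auto simp: last_map conj_centre_Cons conj_centre_def)
    ultimately show ?case by simp
  qed simp
  then show "reduced (conj_prefix ms)" "\<not> fst (hd (conj_prefix ms))"
    "fst (last (conj_prefix ms)) \<noteq> fst (conj_centre ms)"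
    using ms_ne ms_nonzero by auto
  show "conj_prefix ms \<noteq> []" using ms_ne by (cases ms) auto
qed

lemma subst_syllable_ne: "subst_syllable ms a \<noteq> []"
  by (simp add: subst_syllable_def)

lemma subst_syllable_ends:
  "fst (hd (subst_syllable ms a)) = fst a" "fst (last (subst_syllable ms a)) = fst a"
  using conj_prefix_shape by (auto simp: subst_syllable_def last_winv)

lemma reduced_subst_syllable: "snd a \<noteq> 0 \<Longrightarrow> reduced (subst_syllable ms a)"
  using conj_prefix_shape reduced_winv[of "conj_prefix ms"] hd_winv[of "conj_prefix ms"]
  by (auto simp: subst_syllable_def conj_centre_def reduced_Cons intro!: reduced_append)

lemma conj_word_eq: "conj_word ms = subst_syllable ms (False, 1)"
  by (simp add: conj_word_def subst_syllable_def)

lemma subst_word_eq_Nil_iff: "subst_word ms v = [] \<longleftrightarrow> v = []"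
  by (cases v) (simp_all add: subst_word_Cons subst_syllable_ne)

lemma reduced_subst_word: "reduced v \<Longrightarrow> reduced (subst_word ms v)"
proof (induction v)
  case (Cons a v)
  have a: "snd a \<noteq> 0" "reduced v" "v \<noteq> [] \<Longrightarrow> fst a \<noteq> fst (hd v)"
    using Cons.prems by (simp_all add: reduced_Cons)
  have "v \<noteq> [] \<Longrightarrow> fst (hd (subst_word ms v)) = fst (hd v)"
    by (cases v) (simp_all add: subst_word_Cons subst_syllable_ne subst_syllable_ends)
  then show ?case unfolding subst_word_Cons
    using a Cons.IH subst_syllable_ends reduced_subst_syllable subst_word_eq_Nil_iff
    by (intro reduced_append) auto
qed simp

text \<open>An \<open>A\<close>-syllable stays a single \<open>A\<close>-syllable, a \<open>B\<close>-syllable becomes a word of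
  length at least three.\<close>

lemma subst_word_ne_genB: "subst_word ms v \<noteq> [(False, 1)]"
proof (cases v)
  case (Cons a v')
  show ?thesis
  proof (cases "fst a")
    case False
    then have "length (subst_syllable ms a) \<ge> 3"
      using conj_prefix_shape(2) by (cases "conj_prefix ms") (auto simp: subst_syllable_def)
    then have "length (subst_word ms v) \<ge> 3" using Cons by (simp add: subst_word_Cons)
    then show ?thesis by auto
  qed (use Cons in \<open>cases a; simp add: subst_word_Cons subst_syllable_def\<close>)
qed simp

lemma conj_word_not_upper:
  assumes "Gamma_free \<delta>"
  shows "feval \<delta> (conj_word ms) \<noteq> upper x"
proof
  assume upper: "feval \<delta> (conj_word ms) = upper x"
  define u where "u = conj_word ms @ [(True, 1)] @ winv (conj_word ms) @ [(True, -1)]"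
  \<comment> \<open>an upper unipotent matrix commutes with \<open>A\<close>, so this commutator is a relation\<close>
  have "feval \<delta> u = mI"
    using upper by (simp add: u_def feval_append feval_Cons feval_winv syllable_def)
  moreover have "reduced u" "u \<noteq> []"
    using reduced_subst_syllable[of "(False, 1)"] subst_syllable_ends[of "(False, 1)"]
      subst_syllable_ne[of "(False, 1)"] reduced_winv hd_winv last_winv
    unfolding u_def conj_word_eq
    by (auto simp: reduced_Cons reduced_snoc intro!: reduced_append)
  ultimately show False using Gamma_free_reduced[OF assms] by fastforce
qed

end

lemma good_word_decomp:
  assumes "good_word w"
  obtains m\<^sub>1 ms m\<^sub>n where "w = m\<^sub>1 # ms @ [m\<^sub>n]" and "good_middle ms"
proof -
  have len: "length w \<ge> 3" and nz: "\<forall>i. 1 \<le> i \<and> i < length w - 1 \<longrightarrow> w ! i \<noteq> 0"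
    using assms by (auto simp: good_word_def)
  obtain m\<^sub>1 r where w: "w = m\<^sub>1 # r" using len by (cases w) auto
  obtain ms m\<^sub>n where r: "r = ms @ [m\<^sub>n]" using len w by (cases r rule: rev_cases) auto
  have "ms \<noteq> []" using len w r by auto
  moreover have "0 \<notin> set ms"
  proof
    assume "0 \<in> set ms"
    then obtain j where j: "j < length ms" "ms ! j = 0" by (auto simp: in_set_conv_nth)
    then have "w ! Suc j = 0" "1 \<le> Suc j \<and> Suc j < length w - 1"
      using w r by (auto simp: nth_append)
    with nz show False by blast
  qed
  ultimately show thesis using w r that by (auto simp: good_middle_def)
qed

lemma weval_snoc: "xs \<noteq> [] \<Longrightarrow> weval f \<phi> (xs @ [m]) = weval f \<phi> (xs @ [0]) \<star> mpowi f m"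
proof (induction xs)
  case (Cons a xs)
  then show ?case by (cases "xs = []") (simp_all add: weval_Cons mmul_assoc)
qed simp

lemma lower_left_weval_ends:
  assumes "ms \<noteq> []"
  shows "lower_left (weval genA \<phi> (m\<^sub>1 # ms @ [m\<^sub>n])) = lower_left (weval genA \<phi> (0 # ms @ [0]))"
proof -
  have "weval genA \<phi> (ms @ [m\<^sub>n]) = weval genA \<phi> (ms @ [0]) \<star> upper (of_int m\<^sub>n)"
    using weval_snoc[OF assms, of genA \<phi> m\<^sub>n] by (simp add: mpowi_genA)
  then have "lower_left (weval genA \<phi> (m\<^sub>1 # ms @ [m\<^sub>n])) =
      lower_left (upper (of_int m\<^sub>1) \<star> ((\<phi> \<star> weval genA \<phi> (ms @ [0])) \<star> upper (of_int m\<^sub>n)))"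
    by (simp add: weval_Cons mpowi_genA mmul_assoc)
  also have "\<dots> = lower_left (weval genA \<phi> (0 # ms @ [0]))"
    by (simp add: weval_Cons)
  finally show ?thesis .
qed

lemma wpoly_middle_mat:
  assumes "w = m\<^sub>1 # ms @ [m\<^sub>n]" and "ms \<noteq> []" and "c \<noteq> 0"
  shows "wpoly w (c^2) = (lower_left (middle_mat c ms))^2"
  using wpoly_invol[OF assms(3), of w] lower_left_weval_ends[OF assms(2), of "invol c" m\<^sub>1 m\<^sub>n] assms(1)
  by (simp add: middle_mat_def)

lemma conj_upper_eq_uconj_genB:
  assumes det: "mdet W = 1" and r: "lower_left W \<noteq> 0"
  shows "\<exists>t. uconj t (genB ((lower_left W)^2)) = W \<star> upper (-1) \<star> madj W"
proof -
  obtain p q r s where W: "W = Mat p q r s" by (cases W)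
  have "p * s - q * r = 1" "r \<noteq> 0" using det r W by auto
  then have "uconj (p / r) (genB (r^2)) = W \<star> upper (-1) \<star> madj W"
    by (simp add: W uconj_def upper_def genB_def field_simps power2_eq_square)
  then show ?thesis using W by auto
qed

lemma lower_left_0_conj_upper:
  assumes "mdet W = 1" and "lower_left W = 0"
  shows "\<exists>x. W \<star> upper (-1) \<star> madj W = upper x"
proof -
  obtain p q s where W: "W = Mat p q 0 s" using assms(2) by (cases W) auto
  show ?thesis using assms(1) by (simp add: W upper_def power2_eq_square algebra_simps)
qed

lemma good_word_uconj:
  assumes w: "good_word w" and free: "Gamma_free \<delta>"
  obtains ms t where "good_middle ms" and "uconj t (genB (wpoly w \<delta>)) = feval \<delta> (conj_word ms)"
proof -
  obtain m\<^sub>1 ms m\<^sub>n where w': "w = m\<^sub>1 # ms @ [m\<^sub>n]" and ms: "good_middle ms"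
    using good_word_decomp[OF w] by blast
  define c where "c = csqrt \<delta>"
  have c: "c^2 = \<delta>" "c \<noteq> 0" using Gamma_free_nonzero[OF free] by (auto simp: c_def)
  define V where "V = middle_mat c ms"
  have V: "mdet V = 1" by (simp add: V_def middle_mat_def mdet_weval c(2) invol_def)
  have conj: "feval \<delta> (conj_word ms) = V \<star> upper (-1) \<star> madj V"
    using feval_conj_word[OF c(2)] c(1) by (simp add: V_def)
  have "lower_left V \<noteq> 0"
    using lower_left_0_conj_upper[OF V] good_middle.conj_word_not_upper[OF ms free] conj by metis
  then obtain t where "uconj t (genB ((lower_left V)^2)) = feval \<delta> (conj_word ms)"
    using conj_upper_eq_uconj_genB[OF V] conj by auto
  moreover have "wpoly w \<delta> = (lower_left V)^2"
    using wpoly_middle_mat[OF w' _ c(2)] good_middle.ms_ne[OF ms] c(1) by (simp add: V_def)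
  ultimately show thesis using that ms by simp
qed

definition in_Gamma :: "complex \<Rightarrow> mat2 \<Rightarrow> bool" where
  "in_Gamma \<delta> M \<longleftrightarrow> (\<exists>v. feval \<delta> v = M)"

definition uconj_maps :: "complex \<Rightarrow> complex \<Rightarrow> complex \<Rightarrow> bool" where
  "uconj_maps t \<delta>' \<delta> \<longleftrightarrow> (\<forall>M. in_Gamma \<delta>' M \<longrightarrow> in_Gamma \<delta> (uconj t M))"

lemma uconj_maps_0: "uconj_maps 0 \<delta> \<delta>"
  by (simp add: uconj_maps_def)

lemma uconj_maps_trans:
  "uconj_maps s \<delta>'' \<delta>' \<Longrightarrow> uconj_maps t \<delta>' \<delta> \<Longrightarrow> uconj_maps (t + s) \<delta>'' \<delta>"
  unfolding uconj_maps_def by (metis uconj_uconj)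

fun swap_diag :: "mat2 \<Rightarrow> mat2" where
  "swap_diag (Mat a b c d) = Mat d b c a"

lemma swap_diag_mmul: "swap_diag (x \<star> y) = swap_diag y \<star> swap_diag x"
  by (cases x; cases y) (simp add: algebra_simps)

lemma swap_diag_swap_diag [simp]: "swap_diag (swap_diag x) = x"
  and swap_diag_mI [simp]: "swap_diag mI = mI"
  and swap_diag_upper [simp]: "swap_diag (upper t) = upper t"
  and swap_diag_syllable [simp]: "swap_diag (syllable \<delta> y e) = syllable \<delta> y e"
  by (cases x; cases y; simp add: syllable_def upper_def genB_def mI_def)+

lemma swap_diag_feval: "swap_diag (feval \<delta> v) = feval \<delta> (rev v)"
  by (induction v) (simp_all add: feval_Cons feval_append swap_diag_mmul feval_single)

lemma in_Gamma_swap_diag: "in_Gamma \<delta> M \<Longrightarrow> in_Gamma \<delta> (swap_diag M)"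
  by (metis in_Gamma_def swap_diag_feval)

text \<open>The anti-automorphism \<open>swap_diag\<close> fixes \<open>A\<close> and \<open>B\<close>, hence preserves \<open>\<Gamma>\<^sub>\<delta>\<close>,
  and it turns conjugation by \<open>upper t\<close> into conjugation by \<open>upper (- t)\<close>.\<close>

lemma uconj_maps_uminus: "uconj_maps t \<delta>' \<delta> \<Longrightarrow> uconj_maps (- t) \<delta>' \<delta>"
proof -
  have "uconj (- t) M = swap_diag (uconj t (swap_diag M))" for M
    by (simp add: uconj_def swap_diag_mmul mmul_assoc)
  then show "uconj_maps t \<delta>' \<delta> \<Longrightarrow> uconj_maps (- t) \<delta>' \<delta>"
    by (simp add: uconj_maps_def in_Gamma_swap_diag)
qed

lemma in_Gamma_reduced: "in_Gamma \<delta> M \<Longrightarrow> \<exists>v. reduced v \<and> feval \<delta> v = M"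
  by (metis in_Gamma_def reduced_word_exists)

lemma uconj_embedding:
  assumes ms: "good_middle ms" and free: "Gamma_free \<delta>"
    and B: "uconj t (genB \<delta>') = feval \<delta> (conj_word ms)"
  shows "Gamma_free \<delta>'" and "uconj_maps t \<delta>' \<delta>"
    and "\<not> (\<exists>M. in_Gamma \<delta>' M \<and> psl_eq (uconj t M) (genB \<delta>))"
proof -
  note image = uconj_feval_subst_word[OF B]
  show "Gamma_free \<delta>'"
    unfolding Gamma_free_def reduced_fword_iff
  proof (intro allI impI notI)
    fix ws assume ws: "ws \<noteq> [] \<and> reduced ws" and "psl_eq (feval \<delta>' ws) mI"
    then have "psl_eq (feval \<delta> (subst_word ms ws)) mI"
      using psl_eq_uconj[of _ mI t] image by (fastforce simp: uconj_def)
    moreover have "reduced (subst_word ms ws)" "subst_word ms ws \<noteq> []"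
      using ws good_middle.reduced_subst_word[OF ms] good_middle.subst_word_eq_Nil_iff[OF ms]
      by auto
    ultimately show False using Gamma_free_reduced[OF free] by blast
  qed
  show "uconj_maps t \<delta>' \<delta>"
    unfolding uconj_maps_def in_Gamma_def using image by metis
  show "\<not> (\<exists>M. in_Gamma \<delta>' M \<and> psl_eq (uconj t M) (genB \<delta>))"
  proof
    assume "\<exists>M. in_Gamma \<delta>' M \<and> psl_eq (uconj t M) (genB \<delta>)"
    then obtain v where v: "reduced v" "psl_eq (uconj t (feval \<delta>' v)) (genB \<delta>)"
      using in_Gamma_reduced by blast
    then have "psl_eq (feval \<delta> (subst_word ms v)) (feval \<delta> [(False, 1)])"
      using image by (simp add: feval_single syllable_def)
    then have "subst_word ms v = [(False, 1)]"
      using Gamma_free_reduced_unique[OF free] good_middle.reduced_subst_word[OF ms v(1)] by simp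
    then show False using good_middle.subst_word_ne_genB[OF ms] by simp
  qed
qed

lemma Gamma_free_wpoly_embedding:
  assumes "good_word w" and "Gamma_free \<delta>"
  shows "\<exists>t. Gamma_free (wpoly w \<delta>) \<and> uconj_maps t (wpoly w \<delta>) \<delta> \<and>
    \<not> (\<exists>M. in_Gamma (wpoly w \<delta>) M \<and> psl_eq (uconj t M) (genB \<delta>))"
  using good_word_uconj[OF assms] uconj_embedding[OF _ assms(2)] by metis

section \<open>Eventually periodic points\<close>

lemma Gamma_free_funpow:
  assumes "Gamma_free \<gamma>" and "good_word w"
  shows "Gamma_free ((wpoly w ^^ j) \<gamma>)"
  using assms Gamma_free_wpoly_embedding by (induction j) auto

lemma uconj_maps_funpow:
  assumes "Gamma_free \<gamma>" and "good_word w"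
  shows "\<exists>s. uconj_maps s ((wpoly w ^^ (i + l)) \<gamma>) ((wpoly w ^^ i) \<gamma>)"
proof (induction l arbitrary: i)
  case 0
  show ?case using uconj_maps_0 by auto
next
  case (Suc l)
  obtain t where "uconj_maps t ((wpoly w ^^ Suc i) \<gamma>) ((wpoly w ^^ i) \<gamma>)"
    using Gamma_free_wpoly_embedding[OF assms(2) Gamma_free_funpow[OF assms]] by auto
  moreover obtain s where "uconj_maps s ((wpoly w ^^ (Suc i + l)) \<gamma>) ((wpoly w ^^ Suc i) \<gamma>)"
    using Suc.IH by blast
  ultimately show ?case by (auto intro: uconj_maps_trans)
qed

text \<open>If \<open>\<delta> = p\<^sub>w\<^sup>(\<^sup>n\<^sup>)(\<gamma>)\<close> is periodic, some conjugation \<open>uconj u\<close> maps \<open>\<Gamma>\<^sub>\<delta>\<close> into itself, and so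
  does \<open>uconj (- u)\<close>; hence \<open>uconj u\<close> maps \<open>\<Gamma>\<^sub>\<delta>\<close> onto itself. Writing \<open>u = t + s\<close> with
  \<open>uconj t : \<Gamma>\<^bsub>p\<^sub>w(\<delta>)\<^esub> \<rightarrow> \<Gamma>\<^sub>\<delta>\<close>, the generator \<open>B\<^sub>\<delta>\<close> then lies in the image of \<open>uconj t\<close>, which
  contradicts \<open>uconj_embedding\<close>.\<close>

lemma periodic_not_free:
  assumes w: "good_word w" and k: "k \<ge> 1"
    and periodic: "(wpoly w ^^ k) ((wpoly w ^^ n) \<gamma>) = (wpoly w ^^ n) \<gamma>"
  shows "\<not> Gamma_free \<gamma>"
proof
  assume free: "Gamma_free \<gamma>"
  define \<delta> where "\<delta> = (wpoly w ^^ n) \<gamma>"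
  have "Suc n + (k - 1) = k + n" using k by simp
  then have \<delta>: "(wpoly w ^^ (Suc n + (k - 1))) \<gamma> = \<delta>" "(wpoly w ^^ Suc n) \<gamma> = wpoly w \<delta>"
    using periodic by (simp_all only: \<delta>_def funpow_add o_apply funpow.simps)
  obtain t where t: "uconj_maps t (wpoly w \<delta>) \<delta>"
    and not_B: "\<not> (\<exists>M. in_Gamma (wpoly w \<delta>) M \<and> psl_eq (uconj t M) (genB \<delta>))"
    using Gamma_free_wpoly_embedding[OF w Gamma_free_funpow[OF free w]] unfolding \<delta>_def by blast
  obtain s where s: "uconj_maps s \<delta> (wpoly w \<delta>)"
    using uconj_maps_funpow[OF free w, of "Suc n" "k - 1"] \<delta> by auto
  have "uconj_maps (- (t + s)) \<delta> \<delta>"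
    using uconj_maps_uminus[OF uconj_maps_trans[OF s t]] .
  moreover have "in_Gamma \<delta> (genB \<delta>)"
    unfolding in_Gamma_def by (intro exI[of _ "[(False, 1)]"]) (simp add: feval_single syllable_def)
  ultimately have "in_Gamma (wpoly w \<delta>) (uconj s (uconj (- (t + s)) (genB \<delta>)))"
    using s unfolding uconj_maps_def by blast
  moreover have "uconj t (uconj s (uconj (- (t + s)) (genB \<delta>))) = genB \<delta>"
    by simp
  ultimately show False using not_B by (metis psl_eq_refl)
qed

theorem theorem14:
  fixes \<gamma> :: complex
  assumes "\<gamma> \<noteq> 0"
  shows "(\<not> Gamma_free \<gamma> \<longleftrightarrow> (\<exists>w. good_word w \<and> wpoly w \<gamma> = \<gamma>))
     \<and> ((\<exists>w n k. good_word w \<and> k \<ge> 1 \<and>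
            (wpoly w ^^ k) ((wpoly w ^^ n) \<gamma>) = (wpoly w ^^ n) \<gamma>)
        \<longrightarrow> \<not> Gamma_free \<gamma>)"
proof (intro conjI impI iffI)
  assume "\<not> Gamma_free \<gamma>"
  then show "\<exists>w. good_word w \<and> wpoly w \<gamma> = \<gamma>" using not_free_fixed_point[OF assms] by blast
next
  assume "\<exists>w. good_word w \<and> wpoly w \<gamma> = \<gamma>"
  then show "\<not> Gamma_free \<gamma>" using periodic_not_free[of _ 1 0 \<gamma>] by auto
next
  assume "\<exists>w n k. good_word w \<and> k \<ge> 1 \<and> (wpoly w ^^ k) ((wpoly w ^^ n) \<gamma>) = (wpoly w ^^ n) \<gamma>"
  then show "\<not> Gamma_free \<gamma>" using periodic_not_free by blast
qed

end
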